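(* Let $\omega=\frac{-1+\sqrt{-3}}{2}$, so that $-\omega$ is a primitive $6$-th root of unity, and let $\zeta_{12}$ be a primitive $12$-th root of unity. Then $$\{\operatorname{Tr}(M) : M\in G_q(-\omega)\}=\{0,\ c,\ \sqrt{3}\,\zeta_{12}\,c,\ 2c : c=(-\omega)^j,\ j=0,1,\dots,5\}.$$ In particular this set of traces is finite.
   Context: Let $q$ be a formal parameter and let $R_q=\begin{pmatrix} q & 1\\ 0 & 1\end{pmatrix}$, $S_q=\begin{pmatrix} 0 & -q^{-1}\\ 1 & 0\end{pmatrix}\in \mathrm{GL}(2,\mathbb{Z}[q,q^{-1}])$. Let $G_q=\langle R_q,S_q\rangle$ be the group they generate. For $\zeta\in\mathbb{C}^*$, set $G_q(\zeta)=\{M_q|_{q=\zeta} : M_q\in G_q\}\subset \mathrm{GL}(2,\mathbb{C})$. *)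

theory Defs
  imports "HOL-Analysis.Analysis"
begin

text \<open>A 2x2 matrix with entries in Z[q,q^-1] is represented by the function
  q \<mapsto> (its evaluation at q) :: complex^2^2.  A Laurent polynomial is determined
  by its values on the infinite set of nonzero complex numbers, and
  evaluation at q = zeta is just application to zeta.\<close>

definition mat2 :: "complex \<Rightarrow> complex \<Rightarrow> complex \<Rightarrow> complex \<Rightarrow> complex^2^2" where
  "mat2 a b c d = (\<chi> i j. if i = 1 then (if j = 1 then a else b)
                             else (if j = 1 then c else d))"

definition Rq :: "complex \<Rightarrow> complex^2^2" where
  "Rq q = mat2 q 1 0 1"

definition Sq :: "complex \<Rightarrow> complex^2^2" where
  "Sq q = mat2 0 (- inverse q) 1 0"

inductive_set Gq :: "(complex \<Rightarrow> complex^2^2) set" where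
  one: "(\<lambda>q. mat 1) \<in> Gq"
| mulR: "M \<in> Gq \<Longrightarrow> (\<lambda>q. M q ** Rq q) \<in> Gq"
| mulS: "M \<in> Gq \<Longrightarrow> (\<lambda>q. M q ** Sq q) \<in> Gq"
| mulRinv: "M \<in> Gq \<Longrightarrow> (\<lambda>q. M q ** matrix_inv (Rq q)) \<in> Gq"
| mulSinv: "M \<in> Gq \<Longrightarrow> (\<lambda>q. M q ** matrix_inv (Sq q)) \<in> Gq"

definition Gq_at :: "complex \<Rightarrow> (complex^2^2) set" where
  "Gq_at z = (\<lambda>M. M z) ` Gq"

definition tr2 :: "complex^2^2 \<Rightarrow> complex" where
  "tr2 A = A $ 1 $ 1 + A $ 2 $ 2"

definition omega :: complex where
  "omega = (-1 + \<i> * complex_of_real (sqrt 3)) / 2"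

end

(* At q = zeta = -omega one has zeta^2 = zeta - 1, and the vector (1, 1 - zeta) is a common
   eigenvector of R and S, with eigenvalues 1 and zeta.  Hence every M in G_q(zeta) has it as an
   eigenvector with eigenvalue a, and both a and det M are sixth roots of unity; by Cayley-Hamilton
   Tr M = a + det M / a is a sum of two sixth roots of unity, and the words R^n S^m show that every
   such sum occurs.  Finally 1 + zeta^j runs through 2, 1 + zeta, zeta, 0, zeta^5, (1 + zeta) zeta^5,
   and sqrt 3 zeta_12 = (1 + zeta) times a sixth root of unity because (1 + zeta)^2 = 3 zeta. *)

theory Submission
  imports Defs
begin

lemma mat2_nth [simp]:
  "mat2 a b c d $ 1 $ 1 = a" "mat2 a b c d $ 1 $ 2 = b"
  "mat2 a b c d $ 2 $ 1 = c" "mat2 a b c d $ 2 $ 2 = d"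
  by (simp_all add: mat2_def)

lemma det_mat2 [simp]: "det (mat2 a b c d) = a * d - b * c"
  by (simp add: det_2)

lemma mat2_mult_vector [simp]:
  "mat2 a b c d *v vector [x, y] = vector [a * x + b * y, c * x + d * y]"
  by (simp add: vec_eq_iff forall_2 matrix_vector_mult_def sum_2)

lemma cayley_hamilton_2:
  fixes A :: "complex^2^2"
  shows "A *v (A *v x) = tr2 A *s (A *v x) - det A *s x"
  by (simp add: vec_eq_iff forall_2 matrix_vector_mult_def sum_2 det_2 tr2_def algebra_simps)

lemma tr2_eq_eigenvalue_add:
  fixes A :: "complex^2^2"
  assumes eig: "A *v x = a *s x" and "x \<noteq> 0" "a \<noteq> 0"
  shows "tr2 A = a + det A / a"
proof -
  have "(a^2 - tr2 A * a + det A) *s x = 0"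
    using cayley_hamilton_2[of A x]
    by (simp add: eig vector_scalar_commute vector_smult_assoc vector_sadd_rdistrib
        vector_sub_rdistrib power2_eq_square)
  then have "a^2 - tr2 A * a + det A = 0"
    using \<open>x \<noteq> 0\<close> vector_mul_eq_0 by blast
  then show ?thesis
    using \<open>a \<noteq> 0\<close> by (simp add: field_simps power2_eq_square)
qed

lemma matrix_inv:
  assumes "invertible A"
  shows matrix_inv_right: "A ** matrix_inv A = mat 1"
    and matrix_inv_left: "matrix_inv A ** A = mat 1"
  using someI_ex[OF assms[unfolded invertible_def]] by (simp_all add: matrix_inv_def)

lemma det_matrix_inv:
  fixes A :: "'a::field^'n^'n"
  assumes "invertible A"
  shows "det (matrix_inv A) = inverse (det A)"
  using arg_cong[OF matrix_inv_right[OF assms], of det] assms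
  by (simp add: det_mul invertible_det_nz field_simps)

lemma matrix_inv_eigenvector:
  fixes A :: "'a::field^'n^'n"
  assumes "invertible A" and eig: "A *v x = a *s x"
  shows "matrix_inv A *v x = inverse a *s x"
proof -
  have x: "x = a *s (matrix_inv A *v x)"
    by (metis eig matrix_inv_left[OF assms(1)] matrix_vector_mul_assoc matrix_vector_mul_lid
        vector_scalar_commute)
  show ?thesis
  proof (cases "a = 0")
    case False
    then have "inverse a *s x = matrix_inv A *v x"
      by (subst x) (simp add: vector_smult_assoc)
    then show ?thesis by simp
  qed (use x in simp)
qed

lemma mult_eigenvector:
  fixes A B :: "'a::field^'n^'n"
  assumes "A *v x = a *s x" "B *v x = b *s x"
  shows "(A ** B) *v x = (a * b) *s x"
  by (simp add: assms matrix_vector_mul_assoc[symmetric] vector_scalar_commute mult.commute)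

definition zeta6 :: complex where
  "zeta6 = - omega"

lemma of_real_sqrt_3_squared: "(complex_of_real (sqrt 3))^2 = 3"
  by (metis of_real_numeral of_real_power real_sqrt_pow2 zero_le_numeral)

lemma zeta6_squared: "zeta6^2 = zeta6 - 1"
  using of_real_sqrt_3_squared
  unfolding zeta6_def omega_def by (simp add: power2_eq_square field_simps)

lemma zeta6_cubed: "zeta6^3 = -1"
  using zeta6_squared by algebra

lemma zeta6_power_4: "zeta6^4 = - zeta6" and zeta6_power_5: "zeta6^5 = 1 - zeta6"
  using zeta6_squared by algebra+

lemma zeta6_power_6: "zeta6^6 = 1"
  using zeta6_cubed by algebra

lemma zeta6_nonzero: "zeta6 \<noteq> 0"
  using zeta6_cubed by auto

lemma zeta6_power_mod: "zeta6^n = zeta6^(n mod 6)"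
proof -
  have "zeta6^n = zeta6^(6 * (n div 6) + n mod 6)"
    by simp
  also have "\<dots> = (zeta6^6)^(n div 6) * zeta6^(n mod 6)"
    by (simp only: power_add power_mult)
  finally show ?thesis
    by (simp add: zeta6_power_6)
qed

definition mu6 :: "complex set" where
  "mu6 = range (\<lambda>n. zeta6^n)"

lemma mu6_eq_image: "mu6 = (\<lambda>j. zeta6^j) ` {0..5}"
proof
  show "mu6 \<subseteq> (\<lambda>j. zeta6^j) ` {0..5}"
  proof
    fix a assume "a \<in> mu6"
    then obtain n where "a = zeta6^n"
      unfolding mu6_def by auto
    then have "a = zeta6^(n mod 6)"
      using zeta6_power_mod[of n] by simp
    moreover have "n mod 6 \<in> {0..5}" by simp
    ultimately show "a \<in> (\<lambda>j. zeta6^j) ` {0..5}" by blast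
  qed
qed (simp add: mu6_def image_mono)

lemma zeta6_power_in_mu6 [simp]: "zeta6^n \<in> mu6"
  by (simp add: mu6_def)

lemma one_in_mu6 [simp]: "1 \<in> mu6" and zeta6_in_mu6 [simp]: "zeta6 \<in> mu6"
  using zeta6_power_in_mu6[of 0] zeta6_power_in_mu6[of 1] by simp_all

lemma mu6_mult [simp]: "a \<in> mu6 \<Longrightarrow> b \<in> mu6 \<Longrightarrow> a * b \<in> mu6"
  by (auto simp: mu6_def simp flip: power_add)

lemma inverse_zeta6_power: "inverse (zeta6^n) = zeta6^(5 * n)"
proof (rule inverse_unique)
  have "zeta6^n * zeta6^(5 * n) = (zeta6^6)^n"
    by (simp flip: power_add power_mult)
  then show "zeta6^n * zeta6^(5 * n) = 1"
    by (simp add: zeta6_power_6)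
qed

lemma mu6_inverse [simp]: "a \<in> mu6 \<Longrightarrow> inverse a \<in> mu6"
  by (auto simp: mu6_def inverse_zeta6_power)

lemma mu6_nonzero: "a \<in> mu6 \<Longrightarrow> a \<noteq> 0"
  using zeta6_nonzero by (auto simp: mu6_def)

lemma mu6_divide [simp]: "a \<in> mu6 \<Longrightarrow> b \<in> mu6 \<Longrightarrow> a / b \<in> mu6"
  by (simp add: divide_inverse)

lemma inverse_zeta6: "inverse zeta6 = 1 - zeta6"
  by (rule inverse_unique) (use zeta6_squared in \<open>simp add: algebra_simps power2_eq_square\<close>)

lemma det_Rq: "det (Rq q) = q"
  by (simp add: Rq_def)

lemma det_Sq: "det (Sq q) = inverse q"
  by (simp add: Sq_def)

lemma scalar_mult_vector2: "c *s vector [x, y] = (vector [c * x, c * y] :: 'a::semiring_1^2)"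
  by (simp add: vec_eq_iff forall_2)

definition eigvec :: "complex^2" where
  "eigvec = vector [1, 1 - zeta6]"

lemma eigvec_nonzero: "eigvec \<noteq> 0"
  by (metis eigvec_def vector_2(1) zero_index zero_neq_one)

lemma Rq_eigvec: "Rq zeta6 *v eigvec = 1 *s eigvec"
  by (simp add: Rq_def eigvec_def)

lemma Sq_eigvec: "Sq zeta6 *v eigvec = zeta6 *s eigvec"
  using zeta6_squared
  by (simp add: Sq_def eigvec_def scalar_mult_vector2 inverse_zeta6 power2_eq_square
      right_diff_distrib left_diff_distrib)

(* In a basis starting with eigvec such an A is upper triangular, with diagonal entries a and
   det A / a in mu6. *)
definition mu6_triangular :: "complex^2^2 \<Rightarrow> bool" where
  "mu6_triangular A \<longleftrightarrow> (\<exists>a\<in>mu6. A *v eigvec = a *s eigvec) \<and> det A \<in> mu6"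

lemma mu6_triangular_mult:
  "mu6_triangular A \<Longrightarrow> mu6_triangular B \<Longrightarrow> mu6_triangular (A ** B)"
  unfolding mu6_triangular_def by (auto simp: det_mul intro: mult_eigenvector)

lemma mu6_triangular_matrix_inv:
  "mu6_triangular A \<Longrightarrow> mu6_triangular (matrix_inv A)"
  unfolding mu6_triangular_def
  by (metis det_matrix_inv invertible_det_nz matrix_inv_eigenvector mu6_inverse mu6_nonzero)

lemma mu6_triangular_Rq: "mu6_triangular (Rq zeta6)"
  unfolding mu6_triangular_def det_Rq using Rq_eigvec one_in_mu6 zeta6_in_mu6 by blast

lemma mu6_triangular_Sq: "mu6_triangular (Sq zeta6)"
  unfolding mu6_triangular_def det_Sq using Sq_eigvec zeta6_in_mu6 mu6_inverse by blast

lemma mu6_triangular_Gq: "M \<in> Gq \<Longrightarrow> mu6_triangular (M zeta6)"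
proof (induction rule: Gq.induct)
  case one
  show ?case
    unfolding mu6_triangular_def by (auto intro: bexI[of _ 1])
qed (simp_all add: mu6_triangular_mult mu6_triangular_matrix_inv mu6_triangular_Rq mu6_triangular_Sq)

lemma Gq_realizes_powers:
  "\<exists>M\<in>Gq. M zeta6 *v eigvec = zeta6^m *s eigvec \<and> det (M zeta6) = zeta6^n"
proof (induction m arbitrary: n)
  case 0
  show ?case
  proof (induction n)
    case 0
    show ?case by (auto intro: bexI[OF _ Gq.one])
  next
    case (Suc n)
    then obtain M where M: "M \<in> Gq" and eig: "M zeta6 *v eigvec = 1 *s eigvec"
      and det: "det (M zeta6) = zeta6^n"
      by auto
    have "(M zeta6 ** Rq zeta6) *v eigvec = (1 * 1) *s eigvec"
      using mult_eigenvector[OF eig Rq_eigvec] .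
    with det show ?case
      by (intro bexI[OF _ Gq.mulR[OF M]]) (simp add: det_mul det_Rq)
  qed
next
  case (Suc m)
  then obtain M where M: "M \<in> Gq" and eig: "M zeta6 *v eigvec = zeta6^m *s eigvec"
    and det: "det (M zeta6) = zeta6^Suc n"
    by blast
  have "(M zeta6 ** Sq zeta6) *v eigvec = (zeta6^m * zeta6) *s eigvec"
    using mult_eigenvector[OF eig Sq_eigvec] .
  with det zeta6_nonzero show ?case
    by (intro bexI[OF _ Gq.mulS[OF M]]) (simp add: det_mul det_Sq mult.commute)
qed

lemma traces_Gq_at_zeta6: "tr2 ` Gq_at zeta6 = {a + b | a b. a \<in> mu6 \<and> b \<in> mu6}"
proof (intro equalityI subsetI)
  fix t assume "t \<in> tr2 ` Gq_at zeta6"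
  then obtain M where "M \<in> Gq" and t: "t = tr2 (M zeta6)"
    unfolding Gq_at_def by blast
  then obtain a where "a \<in> mu6" "M zeta6 *v eigvec = a *s eigvec" "det (M zeta6) \<in> mu6"
    using mu6_triangular_Gq unfolding mu6_triangular_def by blast
  then show "t \<in> {a + b | a b. a \<in> mu6 \<and> b \<in> mu6}"
    unfolding t using tr2_eq_eigenvalue_add eigvec_nonzero mu6_nonzero mu6_divide by blast
next
  fix t assume "t \<in> {a + b | a b. a \<in> mu6 \<and> b \<in> mu6}"
  then obtain a b where t: "t = a + b" and "a \<in> mu6" "b \<in> mu6"
    by blast
  moreover obtain m n where "a = zeta6^m" "a * b = zeta6^n"
    using \<open>a \<in> mu6\<close> \<open>b \<in> mu6\<close> mu6_mult unfolding mu6_def by blast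
  ultimately obtain M where "M \<in> Gq" "M zeta6 *v eigvec = a *s eigvec" "det (M zeta6) = a * b"
    using Gq_realizes_powers by metis
  moreover have "tr2 (M zeta6) = a + b"
    using tr2_eq_eigenvalue_add[OF \<open>M zeta6 *v eigvec = a *s eigvec\<close> eigvec_nonzero]
      \<open>det (M zeta6) = a * b\<close> mu6_nonzero[OF \<open>a \<in> mu6\<close>] by simp
  ultimately show "t \<in> tr2 ` Gq_at zeta6"
    unfolding Gq_at_def t image_image by (metis (no_types, lifting) rev_image_eqI)
qed

lemma one_add_mu6:
  assumes "b \<in> mu6"
  shows "\<exists>c\<in>mu6. 1 + b = 0 \<or> 1 + b = c \<or> 1 + b = (1 + zeta6) * c \<or> 1 + b = 2 * c"
proof -
  obtain j where "j \<in> {0..5}" and b: "b = zeta6^j"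
    using assms unfolding mu6_eq_image by blast
  then consider "j = 0" | "j = 1" | "j = 2" | "j = 3" | "j = 4" | "j = 5"
    by fastforce
  then show ?thesis
  proof cases
    case 1
    then show ?thesis using b by (intro bexI[of _ 1]) simp_all
  next
    case 2
    then show ?thesis using b by (intro bexI[of _ 1]) simp_all
  next
    case 3
    then show ?thesis using b zeta6_squared by (intro bexI[of _ zeta6]) simp_all
  next
    case 4
    then show ?thesis using b zeta6_cubed by (intro bexI[of _ 1]) simp_all
  next
    case 5
    have "1 + zeta6^4 = zeta6^5"
      using zeta6_power_4 zeta6_power_5 by simp
    then show ?thesis using b 5 by (intro bexI[of _ "zeta6^5"]) simp_all
  next
    case 6
    have "1 + zeta6^5 = (1 + zeta6) * zeta6^5"
      using zeta6_squared zeta6_power_5 by algebra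
    then show ?thesis using b 6 by (intro bexI[of _ "zeta6^5"]) simp_all
  qed
qed

lemma add_mu6:
  assumes a: "a \<in> mu6" and "b \<in> mu6"
  shows "\<exists>c\<in>mu6. a + b = 0 \<or> a + b = c \<or> a + b = (1 + zeta6) * c \<or> a + b = 2 * c"
proof -
  obtain c where c: "c \<in> mu6"
    and "1 + b / a = 0 \<or> 1 + b / a = c \<or> 1 + b / a = (1 + zeta6) * c \<or> 1 + b / a = 2 * c"
    using one_add_mu6[OF mu6_divide[OF assms(2,1)]] by blast
  moreover have ab: "a + b = a * (1 + b / a)"
    using mu6_nonzero[OF a] by (simp add: field_simps)
  ultimately have "a + b = 0 \<or> a + b = a * c \<or> a + b = (1 + zeta6) * (a * c) \<or> a + b = 2 * (a * c)"
    by (elim disjE) (simp_all add: ac_simps)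
  then show ?thesis
    using a c mu6_mult by blast
qed

lemma sums_of_mu6:
  assumes "\<epsilon> \<in> mu6"
  shows "{a + b | a b. a \<in> mu6 \<and> b \<in> mu6} =
    {t. \<exists>c\<in>mu6. t = 0 \<or> t = c \<or> t = (1 + zeta6) * \<epsilon> * c \<or> t = 2 * c}"
proof (intro equalityI subsetI)
  fix t assume "t \<in> {a + b | a b. a \<in> mu6 \<and> b \<in> mu6}"
  then obtain c where "c \<in> mu6" and "t = 0 \<or> t = c \<or> t = (1 + zeta6) * c \<or> t = 2 * c"
    using add_mu6 by blast
  moreover have "(1 + zeta6) * c = (1 + zeta6) * \<epsilon> * (c / \<epsilon>)"
    using mu6_nonzero[OF assms] by simp
  ultimately show "t \<in> {t. \<exists>c\<in>mu6. t = 0 \<or> t = c \<or> t = (1 + zeta6) * \<epsilon> * c \<or> t = 2 * c}"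
    using assms mu6_divide by blast
next
  fix t assume "t \<in> {t. \<exists>c\<in>mu6. t = 0 \<or> t = c \<or> t = (1 + zeta6) * \<epsilon> * c \<or> t = 2 * c}"
  then obtain c where c: "c \<in> mu6"
    and "t = 0 \<or> t = c \<or> t = (1 + zeta6) * \<epsilon> * c \<or> t = 2 * c"
    by blast
  moreover have "0 = 1 + zeta6^3" "c = c * zeta6 + c * zeta6^5"
    unfolding zeta6_cubed zeta6_power_5 by (simp_all add: algebra_simps)
  moreover have "(1 + zeta6) * \<epsilon> * c = \<epsilon> * c + zeta6 * (\<epsilon> * c)"
    by (simp add: algebra_simps)
  ultimately show "t \<in> {a + b | a b. a \<in> mu6 \<and> b \<in> mu6}"
    using assms mu6_mult zeta6_in_mu6 zeta6_power_in_mu6 one_in_mu6 mult_2 by blast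
qed

lemma sqrt3_times_primitive_root_12:
  fixes z :: complex
  assumes "z^12 = 1" and "\<forall>k::nat. 0 < k \<and> k < 12 \<longrightarrow> z^k \<noteq> 1"
  shows "\<exists>\<epsilon>\<in>mu6. complex_of_real (sqrt 3) * z = (1 + zeta6) * \<epsilon>"
proof -
  define y where "y = z^2"
  have "y^6 = 1" "y^3 \<noteq> 1" "y^2 \<noteq> 1"
    using assms(1) assms(2)[rule_format, of 6] assms(2)[rule_format, of 4]
    by (simp_all add: y_def flip: power_mult)
  have "(y^3)^2 = 1"
    using \<open>y^6 = 1\<close> by (simp flip: power_mult)
  then have "y^3 = -1"
    using \<open>y^3 \<noteq> 1\<close> power2_eq_1_iff by blast
  then have "(y + 1) * ((y - zeta6) * (y - zeta6^5)) = 0"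
    using zeta6_squared zeta6_power_5 by algebra
  moreover have "y + 1 \<noteq> 0"
    using \<open>y^2 \<noteq> 1\<close> power2_eq_1_iff[of y] add_eq_0_iff2 by blast
  ultimately have "y = zeta6 \<or> y = zeta6^5"
    by simp
  moreover have "zeta6^5 = zeta6 * (zeta6^2)^2"
    by (simp flip: power_mult power_Suc)
  ultimately obtain k where y: "y = zeta6 * (zeta6^k)^2"
    by (metis mult_1_right power_0 power_one)
  have "(1 + zeta6)^2 = 3 * zeta6"
    using zeta6_squared by algebra
  then have "(complex_of_real (sqrt 3) * z)^2 = ((1 + zeta6) * zeta6^k)^2"
    using y of_real_sqrt_3_squared unfolding y_def by (simp add: power_mult_distrib)
  then have "complex_of_real (sqrt 3) * z = (1 + zeta6) * zeta6^k
      \<or> complex_of_real (sqrt 3) * z = (1 + zeta6) * zeta6^(k + 3)"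
    using zeta6_cubed by (auto simp: power2_eq_iff power_add)
  then show ?thesis
    using zeta6_power_in_mu6 by blast
qed

theorem theorem1p3:
  fixes z12 :: complex
  assumes "z12 ^ 12 = 1" and "\<forall>k::nat. 0 < k \<and> k < 12 \<longrightarrow> z12 ^ k \<noteq> 1"
  shows "tr2 ` Gq_at (- omega) =
           {t. \<exists>j::nat\<in>{0..5}. let c = (- omega) ^ j in
                 t = 0 \<or> t = c \<or> t = complex_of_real (sqrt 3) * z12 * c \<or> t = 2 * c}
         \<and> finite (tr2 ` Gq_at (- omega))"
proof
  obtain \<epsilon> where "\<epsilon> \<in> mu6" and s: "complex_of_real (sqrt 3) * z12 = (1 + zeta6) * \<epsilon>"
    using sqrt3_times_primitive_root_12[OF assms] by blast
  have "tr2 ` Gq_at (- omega) = {a + b | a b. a \<in> mu6 \<and> b \<in> mu6}"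
    using traces_Gq_at_zeta6 by (simp add: zeta6_def)
  also have "\<dots> = {t. \<exists>c\<in>mu6. t = 0 \<or> t = c \<or> t = (1 + zeta6) * \<epsilon> * c \<or> t = 2 * c}"
    using sums_of_mu6[OF \<open>\<epsilon> \<in> mu6\<close>] .
  also have "\<dots> = {t. \<exists>j::nat\<in>{0..5}. let c = (- omega) ^ j in
                 t = 0 \<or> t = c \<or> t = complex_of_real (sqrt 3) * z12 * c \<or> t = 2 * c}"
    unfolding s mu6_eq_image zeta6_def by (simp add: Let_def)
  finally show "tr2 ` Gq_at (- omega) = \<dots>" .
next
  have "finite {a + b | a b. a \<in> mu6 \<and> b \<in> mu6}"
    by (rule finite_image_set2) (simp_all add: mu6_eq_image)
  then show "finite (tr2 ` Gq_at (- omega))"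
    using traces_Gq_at_zeta6 by (simp add: zeta6_def)
qed

end
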